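(* Let $H$ be a propositional formula in conjunctive normal form (a finite set of clauses) over the finite set of variables $\mathrm{Vars}(H)$. Then $H$ is unsatisfiable if and only if $H$ has a Stable Set of Assignments (SSA), i.e., there exist a set $P$ of (full) assignments to $\mathrm{Vars}(H)$, an assignment $\vec{p}_{init} \in P$, and an AC-mapping $\Phi: P \to H$ such that for every $\vec{p} \in P$, $\mathrm{Nbhd}(\vec{p}_{init},\vec{p},\Phi(\vec{p})) \subseteq P$.
   Context: A clause is a disjunction of literals; a CNF formula $H$ is identified with its set of clauses $\{C_1,\dots,C_k\}$ and $\mathrm{Vars}(H)$ denotes its set of variables. Assignments are full assignments to $\mathrm{Vars}(H)$. For an assignment $\vec{p}$ falsifying a clause $C$, $\mathrm{Nbhd}(\vec{p},C)$ is the set of assignments that satisfy $C$ and are at Hamming distance 1 from $\vec{p}$ (equivalently, obtained from $\vec{p}$ by flipping the value of one variable of $C$). For another assignment $\vec{q}$, $\mathrm{Nbhd}(\vec{q},\vec{p},C)$ is the subset of $\mathrm{Nbhd}(\vec{p},C)$ consisting of those assignments whose Hamming distance to $\vec{q}$ is strictly greater than that of $\vec{p}$. An AC-mapping for a set $P$ of assignments each of which falsifies $H$ is a map $\Phi$ assigning to each $\vec{p}\in P$ a clause $\Phi(\vec{p})$ of $H$ falsified by $\vec{p}$ (so in particular every assignment in an SSA falsifies $H$). The assignment $\vec{p}_{init}$ is called the center of the SSA. *)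

theory Defs
  imports Main
begin

text \<open>A literal is a pair (variable, polarity): (v, True) is v, (v, False) is the negation of v.
 A clause is a set of literals, a CNF formula is a set of clauses.\<close>

type_synonym 'v lit = "'v \<times> bool"
type_synonym 'v clause = "'v lit set"
type_synonym 'v cnf = "'v clause set"
type_synonym 'v assignment = "'v \<Rightarrow> bool"

definition is_cnf :: "'v cnf \<Rightarrow> bool" where
  "is_cnf H \<longleftrightarrow> finite H \<and> (\<forall>C\<in>H. finite C)"

definition Vars :: "'v cnf \<Rightarrow> 'v set" where
  "Vars H = fst ` (\<Union>H)"

definition lit_sat :: "'v assignment \<Rightarrow> 'v lit \<Rightarrow> bool" where
  "lit_sat p l \<longleftrightarrow> p (fst l) = snd l"

definition clause_sat :: "'v assignment \<Rightarrow> 'v clause \<Rightarrow> bool" where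
  "clause_sat p C \<longleftrightarrow> (\<exists>l\<in>C. lit_sat p l)"

definition cnf_sat :: "'v assignment \<Rightarrow> 'v cnf \<Rightarrow> bool" where
  "cnf_sat p H \<longleftrightarrow> (\<forall>C\<in>H. clause_sat p C)"

text \<open>Full assignments to Vars(H), represented canonically as functions that are
 False outside Vars(H).\<close>
definition is_assignment :: "'v cnf \<Rightarrow> 'v assignment \<Rightarrow> bool" where
  "is_assignment H p \<longleftrightarrow> (\<forall>v. v \<notin> Vars H \<longrightarrow> p v = False)"

definition satisfiable :: "'v cnf \<Rightarrow> bool" where
  "satisfiable H \<longleftrightarrow> (\<exists>p. is_assignment H p \<and> cnf_sat p H)"

definition hamming :: "'v cnf \<Rightarrow> 'v assignment \<Rightarrow> 'v assignment \<Rightarrow> nat" where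
  "hamming H p q = card {v \<in> Vars H. p v \<noteq> q v}"

definition Nbhd :: "'v cnf \<Rightarrow> 'v assignment \<Rightarrow> 'v clause \<Rightarrow> 'v assignment set" where
  "Nbhd H p C = {r. is_assignment H r \<and> clause_sat r C \<and> hamming H p r = 1}"

definition Nbhd_rel :: "'v cnf \<Rightarrow> 'v assignment \<Rightarrow> 'v assignment \<Rightarrow> 'v clause \<Rightarrow> 'v assignment set" where
  "Nbhd_rel H q p C = {r \<in> Nbhd H p C. hamming H q r > hamming H q p}"

definition AC_mapping :: "'v cnf \<Rightarrow> 'v assignment set \<Rightarrow> ('v assignment \<Rightarrow> 'v clause) \<Rightarrow> bool" where
  "AC_mapping H P \<Phi> \<longleftrightarrow> (\<forall>p\<in>P. \<Phi> p \<in> H \<and> \<not> clause_sat p (\<Phi> p))"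

definition is_SSA :: "'v cnf \<Rightarrow> 'v assignment set \<Rightarrow> 'v assignment \<Rightarrow> ('v assignment \<Rightarrow> 'v clause) \<Rightarrow> bool" where
  "is_SSA H P p_init \<Phi> \<longleftrightarrow>
     (\<forall>p\<in>P. is_assignment H p) \<and> p_init \<in> P \<and> AC_mapping H P \<Phi> \<and>
     (\<forall>p\<in>P. Nbhd_rel H p_init p (\<Phi> p) \<subseteq> P)"

end

theory Submission
  imports Defs
begin

text \<open>If H is unsatisfiable, the set of all assignments with any choice of falsified clauses is
 an SSA. Conversely, suppose H has an SSA with centre p0 and a satisfying assignment s. Among the
 members of the SSA that agree with p0 or with s on every variable, pick one, p, closest to s.
 Since s satisfies the clause falsified by p, flipping one of its variables to its value in s
 yields a neighbour that still lies between p0 and s, is farther from p0 and hence in the SSA,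
 but is closer to s than p.\<close>

lemma finite_Vars: "is_cnf H \<Longrightarrow> finite (Vars H)"
  unfolding is_cnf_def Vars_def by auto

lemma is_assignment_fun_upd:
  "is_assignment H p \<Longrightarrow> v \<in> Vars H \<Longrightarrow> is_assignment H (p(v := b))"
  unfolding is_assignment_def by auto

lemma hamming_fun_upd_flip:
  assumes "v \<in> Vars H" and "p v \<noteq> b"
  shows "hamming H p (p(v := b)) = 1"
proof -
  have "{w \<in> Vars H. p w \<noteq> (p(v := b)) w} = {v}" using assms by auto
  then show ?thesis unfolding hamming_def by simp
qed

lemma hamming_fun_upd_toward:
  assumes "finite (Vars H)" and "v \<in> Vars H" and "p v \<noteq> q v"
  shows "hamming H q (p(v := q v)) < hamming H q p"
proof -
  have differ: "{w \<in> Vars H. q w \<noteq> (p(v := q v)) w} = {w \<in> Vars H. q w \<noteq> p w} - {v}"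
    by auto
  have "finite {w \<in> Vars H. q w \<noteq> p w}" using assms(1) by simp
  moreover have "v \<in> {w \<in> Vars H. q w \<noteq> p w}" using assms(2,3) by auto
  ultimately show ?thesis unfolding hamming_def differ by (rule card_Diff1_less)
qed

lemma hamming_fun_upd_away:
  assumes "finite (Vars H)" and "v \<in> Vars H" and "p v = q v" and "b \<noteq> q v"
  shows "hamming H q p < hamming H q (p(v := b))"
proof -
  have "{w \<in> Vars H. q w \<noteq> (p(v := b)) w} = insert v {w \<in> Vars H. q w \<noteq> p w}"
    using assms(2-4) by auto
  moreover have "v \<notin> {w \<in> Vars H. q w \<noteq> p w}" using assms(3) by auto
  ultimately show ?thesis unfolding hamming_def using assms(1) by simp
qed

lemma clause_sat_differing_literal:
  assumes "\<not> clause_sat p C" and "clause_sat s C"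
  obtains v where "(v, s v) \<in> C" and "p v \<noteq> s v"
proof -
  obtain v b where lit: "(v, b) \<in> C" and "s v = b"
    using assms(2) unfolding clause_sat_def lit_sat_def by auto
  moreover have "p v \<noteq> b" using assms(1) lit unfolding clause_sat_def lit_sat_def by auto
  ultimately show thesis using that by blast
qed

lemma SSA_not_cnf_sat:
  assumes cnf: "is_cnf H" and ssa: "is_SSA H P p0 \<Phi>"
  shows "\<not> cnf_sat s H"
proof
  assume sat: "cnf_sat s H"
  have finV: "finite (Vars H)" using cnf by (rule finite_Vars)
  define between where "between = {p \<in> P. \<forall>v. p v = p0 v \<or> p v = s v}"
  have "p0 \<in> between" using ssa unfolding between_def is_SSA_def by auto
  then obtain p where p_between: "p \<in> between"
    and p_closest: "\<And>q. q \<in> between \<Longrightarrow> hamming H s p \<le> hamming H s q"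
    using ex_has_least_nat[of "\<lambda>q. q \<in> between" p0 "hamming H s"] by blast
  have pP: "p \<in> P" and p_agrees: "\<And>v. p v = p0 v \<or> p v = s v"
    using p_between unfolding between_def by auto
  have CH: "\<Phi> p \<in> H" and p_falsifies: "\<not> clause_sat p (\<Phi> p)"
    using ssa pP unfolding is_SSA_def AC_mapping_def by auto
  have "clause_sat s (\<Phi> p)" using sat CH unfolding cnf_sat_def by auto
  with p_falsifies obtain v where lit: "(v, s v) \<in> \<Phi> p" and pv: "p v \<noteq> s v"
    by (rule clause_sat_differing_literal)
  define r where "r = p(v := s v)"
  have vV: "v \<in> Vars H" using lit CH unfolding Vars_def by force
  have "is_assignment H r"
    using ssa pP vV unfolding is_SSA_def r_def by (auto intro: is_assignment_fun_upd)
  moreover have "clause_sat r (\<Phi> p)"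
    using lit unfolding clause_sat_def lit_sat_def r_def by force
  moreover have "hamming H p r = 1" using vV pv unfolding r_def by (rule hamming_fun_upd_flip)
  moreover have "hamming H p0 p < hamming H p0 r"
    unfolding r_def using finV vV p_agrees[of v] pv by (intro hamming_fun_upd_away) auto
  ultimately have "r \<in> Nbhd_rel H p0 p (\<Phi> p)" unfolding Nbhd_rel_def Nbhd_def by auto
  then have "r \<in> between"
    using ssa pP p_agrees unfolding is_SSA_def between_def r_def by auto
  moreover have "hamming H s r < hamming H s p"
    unfolding r_def using finV vV pv by (rule hamming_fun_upd_toward)
  ultimately show False using p_closest by fastforce
qed

lemma unsatisfiable_imp_SSA:
  assumes "\<not> satisfiable H" and "is_assignment H p0"
  shows "\<exists>\<Phi>. is_SSA H {p. is_assignment H p} p0 \<Phi>"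
proof -
  have "\<forall>p\<in>{p. is_assignment H p}. \<exists>C. C \<in> H \<and> \<not> clause_sat p C"
    using assms(1) unfolding satisfiable_def cnf_sat_def by auto
  then obtain \<Phi> where "AC_mapping H {p. is_assignment H p} \<Phi>"
    unfolding AC_mapping_def by metis
  then have "is_SSA H {p. is_assignment H p} p0 \<Phi>"
    using assms(2) unfolding is_SSA_def Nbhd_rel_def Nbhd_def by auto
  then show ?thesis by blast
qed

theorem proposition1:
  fixes H :: "'v cnf"
  assumes "is_cnf H"
  shows "\<not> satisfiable H \<longleftrightarrow> (\<exists>P p_init \<Phi>. is_SSA H P p_init \<Phi>)"
proof
  assume "\<not> satisfiable H"
  moreover have "is_assignment H (\<lambda>_. False)" unfolding is_assignment_def by simp
  ultimately show "\<exists>P p_init \<Phi>. is_SSA H P p_init \<Phi>" by (blast dest: unsatisfiable_imp_SSA)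
next
  assume "\<exists>P p_init \<Phi>. is_SSA H P p_init \<Phi>"
  then show "\<not> satisfiable H"
    using SSA_not_cnf_sat[OF assms] unfolding satisfiable_def by blast
qed

end
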